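(* Let $m\ge1$ and let $\phi\in C^\infty(\mathbb R^2)$ satisfy, for some $C>0$ and all $z\in\mathbb R^2$, $|D^3\phi(z)|\le C|z|^{2m-1}$, $|D^2\phi(z)|\le C|z|^{2m}$, $|D\phi(z)|\le C|z|^{2m+1}$. There exist constants $C_2>1$ and $\varepsilon_0,\varepsilon_2\in(0,1)$ such that for every $z\ne0$ there is a unit vector $u\in\mathbb S^1\subset\mathbb R^2$ such that for every $r\in(0,\varepsilon_0|z|)$ one has $B_{\mathrm{Eucl}}(z+\tfrac r2u,\varepsilon_2 r)\subset B_{\mathrm{Eucl}}(z,r)$ and $$|M(\zeta-z)|\ge C_2^{-1}|z|^{2m}r$$ for every $\zeta\in B_{\mathrm{Eucl}}(z+\tfrac r2u,\varepsilon_2r)$ and every matrix $M$ of the form $$M=\begin{bmatrix}\phi_{xx}(z')-2m|z|^{2m-2}xy & \phi_{xy}(z')-|z|^{2m-2}(|z|^2+2my^2)\\ \phi_{xy}(z'')+|z|^{2m-2}(|z|^2+2mx^2) & \phi_{yy}(z'')+2m|z|^{2m-2}xy\end{bmatrix},\qquad z=(x,y),$$ with $z',z''$ arbitrary points of the segment $[z,\zeta]$.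
   Context: $B_{\mathrm{Eucl}}(w,\rho)$ denotes the Euclidean disk in $\mathbb R^2$ of center $w$ and radius $\rho$. $|D^k\phi(z)|$ is the maximum of the absolute values of all $k$-th order partial derivatives of $\phi$ at $z$. *)

theory Defs
  imports "HOL-Analysis.Analysis"
begin

text \<open>Points of the plane are pairs \<open>(x,y) :: real \<times> real\<close>; the norm on
  \<open>real \<times> real\<close> is the Euclidean norm.\<close>

definition pdx :: "(real \<times> real \<Rightarrow> real) \<Rightarrow> real \<times> real \<Rightarrow> real" where
  "pdx f z = deriv (\<lambda>t. f (t, snd z)) (fst z)"

definition pdy :: "(real \<times> real \<Rightarrow> real) \<Rightarrow> real \<times> real \<Rightarrow> real" where
  "pdy f z = deriv (\<lambda>t. f (fst z, t)) (snd z)"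

text \<open>Iterated partial derivative: the list is read left to right,
  \<open>True\<close> = derivative in x, \<open>False\<close> = derivative in y.\<close>
fun pd :: "bool list \<Rightarrow> (real \<times> real \<Rightarrow> real) \<Rightarrow> real \<times> real \<Rightarrow> real" where
  "pd [] f = f"
| "pd (b # bs) f = pd bs (if b then pdx f else pdy f)"

text \<open>\<open>C^\<infinity>\<close>: every iterated partial derivative exists and is (Frechet)
  differentiable everywhere (hence all partials of all orders are continuous).\<close>
definition smooth2 :: "(real \<times> real \<Rightarrow> real) \<Rightarrow> bool" where
  "smooth2 f \<longleftrightarrow> (\<forall>ws. pd ws f differentiable_on UNIV)"

text \<open>\<open>|D^k f(z)|\<close>: maximum of the absolute values of all k-th order partials.\<close>
definition Dnorm :: "nat \<Rightarrow> (real \<times> real \<Rightarrow> real) \<Rightarrow> real \<times> real \<Rightarrow> real" where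
  "Dnorm k f z = Max {\<bar>pd ws f z\<bar> | ws. length ws = k}"

definition mat2_app :: "real \<Rightarrow> real \<Rightarrow> real \<Rightarrow> real \<Rightarrow> real \<times> real \<Rightarrow> real \<times> real" where
  "mat2_app a b c d w = (a * fst w + b * snd w, c * fst w + d * snd w)"

end

theory Submission
  imports Defs
begin

text \<open>Write \<open>N = |z|^(2m)\<close>. The two weights added to \<open>\<phi>_xy\<close> in the off-diagonal
  entries are both at least \<open>N\<close> and enter with opposite signs, so at the base point \<open>z\<close> one
  of the off-diagonal entries has absolute value at least \<open>N\<close>; \<open>u\<close> is the coordinate
  direction which that entry multiplies. For \<open>r \<ll> |z|\<close> the third-derivative bound keeps
  \<open>\<phi>_xy\<close> within \<open>N/2\<close> of its value at \<open>z\<close> along \<open>[z, \<zeta>]\<close>, and the second-derivative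
  bound makes every entry \<open>O(N)\<close>. Since \<open>\<zeta> - z\<close> is \<open>(r/2) u\<close> up to an error of size
  \<open>\<epsilon>\<^sub>2 r\<close>, the dominant entry contributes at least \<open>N r/4\<close> to one coordinate of
  \<open>M (\<zeta> - z)\<close> and everything else at most \<open>N r/8\<close>.\<close>

lemma pd_append_single: "pd (ws @ [b]) f = (if b then pdx (pd ws f) else pdy (pd ws f))"
  by (induction ws arbitrary: f) auto

lemma abs_pd_le_Dnorm:
  assumes "length ws = k"
  shows "\<bar>pd ws f z\<bar> \<le> Dnorm k f z"
proof -
  have "finite {ws :: bool list. length ws = k}"
    using finite_lists_length_eq[of "UNIV :: bool set" k] by simp
  then have "finite {\<bar>pd ws f z\<bar> | ws. length ws = k}"
    by (simp add: setcompr_eq_image)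
  then show ?thesis
    unfolding Dnorm_def using assms by (intro Max_ge) auto
qed

lemma abs_pd_le_growth:
  assumes "\<forall>z. Dnorm k f z \<le> C * norm z ^ n" "0 \<le> C" "length ws = k" "norm p \<le> R"
  shows "\<bar>pd ws f p\<bar> \<le> C * R ^ n"
proof -
  have "\<bar>pd ws f p\<bar> \<le> C * norm p ^ n"
    using abs_pd_le_Dnorm[OF assms(3)] assms(1) by (meson order_trans)
  also have "\<dots> \<le> C * R ^ n"
    using assms(2,4) by (intro mult_left_mono power_mono) auto
  finally show ?thesis .
qed

lemma linear_pair_expand:
  assumes "linear D"
  shows "D v = fst v * D (1, 0) + snd v * D (0, 1 :: real)"
proof -
  have "D v = D (fst v *\<^sub>R (1, 0) + snd v *\<^sub>R (0, 1))"
    by simp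
  also have "\<dots> = fst v * D (1, 0) + snd v * D (0, 1)"
    by (simp only: linear_add[OF assms] linear_scale[OF assms] real_scaleR_def)
  finally show ?thesis .
qed

lemma has_derivative_imp_pdx:
  assumes "(g has_derivative D) (at p)"
  shows "pdx g p = D (1, 0)"
proof -
  have scale: "(\<lambda>s. D (s, 0)) = (*) (D (1, 0))"
  proof
    fix s
    show "D (s, 0) = D (1, 0) * s"
      using linear_scale[OF has_derivative_linear[OF assms], of s "(1, 0)"] by simp
  qed
  have "((\<lambda>t. (t, snd p)) has_derivative (\<lambda>s. (s, 0))) (at (fst p))"
    by (auto intro!: derivative_eq_intros)
  from diff_chain_at[OF this, of g D] assms
  have "((\<lambda>t. g (t, snd p)) has_field_derivative D (1, 0)) (at (fst p))"
    by (simp add: o_def scale has_field_derivative_def)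
  then show ?thesis
    unfolding pdx_def by (rule DERIV_imp_deriv)
qed

lemma has_derivative_imp_pdy:
  assumes "(g has_derivative D) (at p)"
  shows "pdy g p = D (0, 1)"
proof -
  have scale: "(\<lambda>s. D (0, s)) = (*) (D (0, 1))"
  proof
    fix s
    show "D (0, s) = D (0, 1) * s"
      using linear_scale[OF has_derivative_linear[OF assms], of s "(0, 1)"] by simp
  qed
  have "((\<lambda>t. (fst p, t)) has_derivative (\<lambda>s. (0, s))) (at (snd p))"
    by (auto intro!: derivative_eq_intros)
  from diff_chain_at[OF this, of g D] assms
  have "((\<lambda>t. g (fst p, t)) has_field_derivative D (0, 1)) (at (snd p))"
    by (simp add: o_def scale has_field_derivative_def)
  then show ?thesis
    unfolding pdy_def by (rule DERIV_imp_deriv)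
qed

lemma abs_fst_le_norm: "\<bar>fst w\<bar> \<le> norm (w :: real \<times> real)"
  using norm_fst_le[of "fst w" "snd w"] by simp

lemma abs_snd_le_norm: "\<bar>snd w\<bar> \<le> norm (w :: real \<times> real)"
  using norm_snd_le[of "snd w" "fst w"] by simp

lemma abs_diff_le_partials:
  fixes g :: "real \<times> real \<Rightarrow> real"
  assumes dg: "g differentiable_on UNIV"
    and bound: "\<And>p. p \<in> closed_segment a b \<Longrightarrow> \<bar>pdx g p\<bar> \<le> K \<and> \<bar>pdy g p\<bar> \<le> K"
  shows "\<bar>g b - g a\<bar> \<le> 2 * K * norm (b - a)"
proof -
  have "\<forall>p. \<exists>D. (g has_derivative D) (at p)"
    using dg unfolding differentiable_on_def differentiable_def by blast
  then have "\<exists>D. \<forall>p. (g has_derivative D p) (at p)"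
    by (rule choice)
  then obtain D where D: "\<And>p. (g has_derivative D p) (at p)"
    by blast
  have "onorm (D p) \<le> 2 * K" if p: "p \<in> closed_segment a b" for p
  proof (rule onorm_le)
    fix w :: "real \<times> real"
    have "D p w = fst w * pdx g p + snd w * pdy g p"
      using linear_pair_expand[OF has_derivative_linear[OF D], of p w]
        has_derivative_imp_pdx[OF D] has_derivative_imp_pdy[OF D] by simp
    also have "\<bar>\<dots>\<bar> \<le> \<bar>fst w\<bar> * K + \<bar>snd w\<bar> * K"
      using bound[OF p] abs_triangle_ineq[of "fst w * pdx g p" "snd w * pdy g p"]
        mult_left_mono[of "\<bar>pdx g p\<bar>" K "\<bar>fst w\<bar>"] mult_left_mono[of "\<bar>pdy g p\<bar>" K "\<bar>snd w\<bar>"]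
      by (simp add: abs_mult)
    also have "\<dots> \<le> 2 * K * norm w"
    proof -
      have K: "0 \<le> K"
        using bound[OF p] by linarith
      have "\<bar>fst w\<bar> * K + \<bar>snd w\<bar> * K \<le> norm w * K + norm w * K"
        using mult_right_mono[OF abs_fst_le_norm[of w] K] mult_right_mono[OF abs_snd_le_norm[of w] K]
        by (rule add_mono)
      then show ?thesis
        by (simp add: algebra_simps)
    qed
    finally show "norm (D p w) \<le> 2 * K * norm w"
      by simp
  qed
  then show ?thesis
    using differentiable_bound[of "closed_segment a b" g D "2 * K" b a]
    by (simp add: D has_derivative_at_withinI)
qed

lemma abs_pd_diff_le:
  assumes "smooth2 f" "\<forall>q. Dnorm (Suc (length ws)) f q \<le> C * norm q ^ n" "0 \<le> C"
    and "closed_segment a b \<subseteq> cball 0 R"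
  shows "\<bar>pd ws f b - pd ws f a\<bar> \<le> 2 * (C * R ^ n) * norm (b - a)"
proof (rule abs_diff_le_partials)
  show "pd ws f differentiable_on UNIV"
    using assms(1) unfolding smooth2_def by blast
  fix p assume "p \<in> closed_segment a b"
  then have "norm p \<le> R"
    using assms(4) by auto
  then have "\<bar>pd (ws @ [b]) f p\<bar> \<le> C * R ^ n" for b
    using abs_pd_le_growth[OF assms(2,3)] by simp
  then show "\<bar>pdx (pd ws f) p\<bar> \<le> C * R ^ n \<and> \<bar>pdy (pd ws f) p\<bar> \<le> C * R ^ n"
    using pd_append_single[of ws True f] pd_append_single[of ws False f] by metis
qed

lemma power_even_split:
  fixes s :: "'a :: monoid_mult"
  assumes "1 \<le> m"
  shows "s ^ (2*m) = s ^ (2*m - 2) * s\<^sup>2"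
proof -
  have "2*m = 2*m - 2 + 2"
    using assms by simp
  then show ?thesis
    by (metis power_add)
qed

lemma weighted_power_bounds:
  fixes s a :: real
  assumes "1 \<le> m" "0 \<le> s" "a\<^sup>2 \<le> s\<^sup>2"
  shows "s ^ (2*m) \<le> s ^ (2*m - 2) * (s\<^sup>2 + 2 * real m * a\<^sup>2)"
    and "s ^ (2*m - 2) * (s\<^sup>2 + 2 * real m * a\<^sup>2) \<le> (1 + 2 * real m) * s ^ (2*m)"
proof -
  note split = power_even_split[OF assms(1), of s]
  have "0 \<le> s ^ (2*m - 2) * (2 * real m * a\<^sup>2)"
    using assms(2) by simp
  then show "s ^ (2*m) \<le> s ^ (2*m - 2) * (s\<^sup>2 + 2 * real m * a\<^sup>2)"
    by (simp add: split distrib_left)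
  have "s ^ (2*m - 2) * (2 * real m * a\<^sup>2) \<le> s ^ (2*m - 2) * (2 * real m * s\<^sup>2)"
    using assms(2,3) by (intro mult_left_mono) auto
  then show "s ^ (2*m - 2) * (s\<^sup>2 + 2 * real m * a\<^sup>2) \<le> (1 + 2 * real m) * s ^ (2*m)"
    unfolding split by (simp add: algebra_simps)
qed

definition cross_term :: "nat \<Rightarrow> real \<times> real \<Rightarrow> real" where
  "cross_term m z = 2 * real m * norm z ^ (2*m - 2) * fst z * snd z"

definition weight_x :: "nat \<Rightarrow> real \<times> real \<Rightarrow> real" where
  "weight_x m z = norm z ^ (2*m - 2) * (norm z ^ 2 + 2 * real m * (fst z)^2)"

definition weight_y :: "nat \<Rightarrow> real \<times> real \<Rightarrow> real" where
  "weight_y m z = norm z ^ (2*m - 2) * (norm z ^ 2 + 2 * real m * (snd z)^2)"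

lemma abs_cross_term_le:
  assumes "1 \<le> m"
  shows "\<bar>cross_term m z\<bar> \<le> 2 * real m * norm z ^ (2*m)"
proof -
  have "\<bar>fst z\<bar> * \<bar>snd z\<bar> \<le> norm z * norm z"
    using abs_fst_le_norm[of z] abs_snd_le_norm[of z] by (intro mult_mono) auto
  then have "norm z ^ (2*m - 2) * \<bar>fst z * snd z\<bar> \<le> norm z ^ (2*m - 2) * (norm z)\<^sup>2"
    by (simp add: abs_mult power2_eq_square mult_left_mono)
  also have "\<dots> = norm z ^ (2*m)"
    by (rule power_even_split[OF assms, symmetric])
  finally have "norm z ^ (2*m - 2) * \<bar>fst z * snd z\<bar> \<le> norm z ^ (2*m)" .
  then have "2 * real m * (norm z ^ (2*m - 2) * \<bar>fst z * snd z\<bar>) \<le> 2 * real m * norm z ^ (2*m)"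
    by (rule mult_left_mono) simp
  then show ?thesis
    by (simp add: cross_term_def abs_mult mult.assoc)
qed

lemma weight_bounds:
  assumes "1 \<le> m"
  shows "norm z ^ (2*m) \<le> weight_x m z" "weight_x m z \<le> norm z ^ (2*m) + 2 * real m * norm z ^ (2*m)"
    and "norm z ^ (2*m) \<le> weight_y m z" "weight_y m z \<le> norm z ^ (2*m) + 2 * real m * norm z ^ (2*m)"
proof -
  have "(fst z)\<^sup>2 \<le> (norm z)\<^sup>2" "(snd z)\<^sup>2 \<le> (norm z)\<^sup>2"
    using abs_le_square_iff[of "fst z" "norm z"] abs_le_square_iff[of "snd z" "norm z"]
      abs_fst_le_norm[of z] abs_snd_le_norm[of z] by simp_all
  note bounds = weighted_power_bounds[OF assms norm_ge_zero this(1)]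
    weighted_power_bounds[OF assms norm_ge_zero this(2)]
  show "norm z ^ (2*m) \<le> weight_x m z" "weight_x m z \<le> norm z ^ (2*m) + 2 * real m * norm z ^ (2*m)"
    and "norm z ^ (2*m) \<le> weight_y m z" "weight_y m z \<le> norm z ^ (2*m) + 2 * real m * norm z ^ (2*m)"
    using bounds by (simp_all add: weight_x_def weight_y_def distrib_right)
qed

lemma abs_linear_form_ge:
  fixes \<alpha> \<beta> e1 e2 r N B \<epsilon> :: real
  assumes "N / 2 \<le> \<bar>\<beta>\<bar>" "\<bar>\<alpha>\<bar> \<le> B * N" "\<bar>\<beta>\<bar> \<le> B * N"
    and "\<bar>e1\<bar> \<le> \<epsilon> * r" "\<bar>e2\<bar> \<le> \<epsilon> * r" "16 * B * \<epsilon> \<le> 1" "0 < r" "0 \<le> N" "0 \<le> \<epsilon>"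
  shows "N * r / 8 \<le> \<bar>\<alpha> * e1 + \<beta> * (r / 2 + e2)\<bar>"
proof -
  have "\<bar>\<alpha> * e1\<bar> \<le> (B * N) * (\<epsilon> * r)" "\<bar>\<beta> * e2\<bar> \<le> (B * N) * (\<epsilon> * r)"
    unfolding abs_mult using assms(2-5) by (auto intro!: mult_mono)
  then have "\<bar>\<alpha> * e1\<bar> + \<bar>\<beta> * e2\<bar> \<le> 2 * ((B * N) * (\<epsilon> * r))"
    by simp
  also have "\<dots> = (2 * B * \<epsilon>) * (N * r)"
    by simp
  also have "\<dots> \<le> (1 / 8) * (N * r)"
    using assms(6-8) by (intro mult_right_mono) auto
  finally have small: "\<bar>\<alpha> * e1\<bar> + \<bar>\<beta> * e2\<bar> \<le> N * r / 8"
    by simp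
  have "N * r / 4 \<le> \<bar>\<beta> * (r / 2)\<bar>"
    using assms(1,7) mult_right_mono[of "N / 2" "\<bar>\<beta>\<bar>" "r / 2"] by (simp add: abs_mult)
  moreover have "\<alpha> * e1 + \<beta> * (r / 2 + e2) = \<beta> * (r / 2) + \<alpha> * e1 + \<beta> * e2"
    by (simp add: algebra_simps)
  ultimately show ?thesis
    using small by linarith
qed

lemma norm_mat2_app_ge:
  assumes dominant: "u = (0, 1) \<and> N / 2 \<le> \<bar>b\<bar> \<or> u = (1, 0) \<and> N / 2 \<le> \<bar>c\<bar>"
    and "\<bar>a\<bar> \<le> B * N" "\<bar>b\<bar> \<le> B * N" "\<bar>c\<bar> \<le> B * N" "\<bar>d\<bar> \<le> B * N"
    and "norm e \<le> \<epsilon> * r" "16 * B * \<epsilon> \<le> 1" "0 < r" "0 \<le> N" "0 \<le> \<epsilon>"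
  shows "N * r / 8 \<le> norm (mat2_app a b c d ((r / 2) *\<^sub>R u + e))"
proof -
  have e: "\<bar>fst e\<bar> \<le> \<epsilon> * r" "\<bar>snd e\<bar> \<le> \<epsilon> * r"
    using abs_fst_le_norm[of e] abs_snd_le_norm[of e] assms(6) by linarith+
  let ?v = "mat2_app a b c d ((r / 2) *\<^sub>R u + e)"
  from dominant show ?thesis
  proof (elim disjE conjE)
    assume "u = (0, 1)" "N / 2 \<le> \<bar>b\<bar>"
    then have "N * r / 8 \<le> \<bar>fst ?v\<bar>"
      using abs_linear_form_ge[of N b a B "fst e" \<epsilon> r "snd e"] e assms(2,3,7-10)
      by (simp add: mat2_app_def)
    then show ?thesis
      using abs_fst_le_norm[of ?v] by linarith
  next
    assume "u = (1, 0)" "N / 2 \<le> \<bar>c\<bar>"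
    then have "N * r / 8 \<le> \<bar>snd ?v\<bar>"
      using abs_linear_form_ge[of N c d B "snd e" \<epsilon> r "fst e"] e assms(4,5,7-10)
      by (simp add: mat2_app_def algebra_simps)
    then show ?thesis
      using abs_snd_le_norm[of ?v] by linarith
  qed
qed

lemma ball_offset_subset_ball:
  fixes z u :: "'a :: real_normed_vector"
  assumes "norm u = 1" "0 < r" "\<epsilon> \<le> 1 / 2"
  shows "ball (z + (r / 2) *\<^sub>R u) (\<epsilon> * r) \<subseteq> ball z r"
proof
  fix \<zeta> assume "\<zeta> \<in> ball (z + (r / 2) *\<^sub>R u) (\<epsilon> * r)"
  then have "dist (z + (r / 2) *\<^sub>R u) \<zeta> < \<epsilon> * r"
    by simp
  moreover have "dist z (z + (r / 2) *\<^sub>R u) = r / 2"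
    using assms(1,2) by (simp add: dist_norm)
  moreover have "\<epsilon> * r \<le> r / 2"
    using assms(2,3) by (simp add: mult_right_mono)
  ultimately show "\<zeta> \<in> ball z r"
    using dist_triangle[of z \<zeta> "z + (r / 2) *\<^sub>R u"] by simp
qed

lemma norm_le_twice_if_near:
  fixes p z :: "'a :: real_normed_vector"
  assumes "e0 \<le> 1" "norm (p - z) \<le> e0 * norm z"
  shows "norm p \<le> 2 * norm z"
proof -
  have "e0 * norm z \<le> norm z"
    using assms(1) mult_right_mono[of e0 1 "norm z"] by simp
  then show ?thesis
    using assms(2) norm_triangle_ineq[of z "p - z"] by simp
qed

lemma abs_second_pd_le:
  assumes "\<forall>z. Dnorm 2 \<phi> z \<le> C * norm z ^ (2*m)" "0 \<le> C" "length ws = 2"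
    and "norm p \<le> 2 * norm z"
  shows "\<bar>pd ws \<phi> p\<bar> \<le> C * 4 ^ m * norm z ^ (2*m)"
  using abs_pd_le_growth[OF assms] by (simp add: power_mult_distrib power_mult)

lemma abs_pd_mixed_diff_le:
  assumes "1 \<le> m" "smooth2 \<phi>" "0 \<le> C" "\<forall>z. Dnorm 3 \<phi> z \<le> C * norm z ^ (2*m - 1)"
    and "e0 \<le> 1" "C * 4 ^ m * e0 \<le> 1 / 2" "norm (p - z) \<le> e0 * norm z"
  shows "\<bar>pd [True, False] \<phi> p - pd [True, False] \<phi> z\<bar> \<le> norm z ^ (2*m) / 2"
proof -
  have "closed_segment z p \<subseteq> cball 0 (2 * norm z)"
  proof
    fix q assume "q \<in> closed_segment z p"
    then have "norm (q - z) \<le> norm (p - z)"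
      using dist_in_closed_segment[of q z p] by (simp add: dist_norm norm_minus_commute)
    then have "norm (q - z) \<le> e0 * norm z"
      using assms(7) by linarith
    then show "q \<in> cball 0 (2 * norm z)"
      using norm_le_twice_if_near[OF assms(5)] by simp
  qed
  moreover have "\<forall>q. Dnorm (Suc (length [True, False])) \<phi> q \<le> C * norm q ^ (2*m - 1)"
    using assms(4) by (simp add: numeral_3_eq_3)
  ultimately have "\<bar>pd [True, False] \<phi> p - pd [True, False] \<phi> z\<bar>
      \<le> 2 * (C * (2 * norm z) ^ (2*m - 1)) * norm (p - z)"
    using abs_pd_diff_le[OF assms(2) _ assms(3)] by blast
  also have "\<dots> \<le> 2 * (C * (2 * norm z) ^ (2*m - 1)) * (e0 * norm z)"
    using assms(3,7) by (intro mult_left_mono) auto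
  also have "\<dots> = (C * 4 ^ m * e0) * norm z ^ (2*m)"
  proof -
    have "(2 * norm z) ^ (2*m - 1) * (2 * norm z) = (2 * norm z) ^ (2*m)"
      using assms(1) by (intro power_minus_mult) simp
    also have "\<dots> = 4 ^ m * norm z ^ (2*m)"
      unfolding power_mult_distrib power_mult by simp
    finally show ?thesis
      by (simp add: algebra_simps)
  qed
  also have "\<dots> \<le> (1 / 2) * norm z ^ (2*m)"
    using assms(6) by (intro mult_right_mono) auto
  finally show ?thesis
    by simp
qed

lemma closed_segment_offset_ball_subset:
  fixes z u :: "'a :: real_normed_vector"
  assumes "norm u = 1" "0 < r" "\<epsilon> \<le> 1 / 2" "\<zeta> \<in> ball (z + (r / 2) *\<^sub>R u) (\<epsilon> * r)"
  shows "closed_segment z \<zeta> \<subseteq> ball z r"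
proof (rule closed_segment_subset)
  show "\<zeta> \<in> ball z r"
    using ball_offset_subset_ball[OF assms(1-3)] assms(4) by blast
qed (use assms(2) in auto)

definition dominant_direction ::
    "(real \<times> real \<Rightarrow> real) \<Rightarrow> nat \<Rightarrow> real \<times> real \<Rightarrow> real \<times> real \<Rightarrow> bool" where
  "dominant_direction \<phi> m z u \<longleftrightarrow>
    u = (0, 1) \<and> norm z ^ (2*m) \<le> \<bar>pd [True, False] \<phi> z - weight_y m z\<bar> \<or>
    u = (1, 0) \<and> norm z ^ (2*m) \<le> \<bar>pd [True, False] \<phi> z + weight_x m z\<bar>"

lemma exists_dominant_direction:
  assumes "1 \<le> m"
  obtains u where "dominant_direction \<phi> m z u"
proof (cases "norm z ^ (2*m) \<le> \<bar>pd [True, False] \<phi> z - weight_y m z\<bar>")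
  case True
  with that[of "(0, 1)"] show ?thesis
    by (simp add: dominant_direction_def)
next
  case False
  then have "norm z ^ (2*m) \<le> \<bar>pd [True, False] \<phi> z + weight_x m z\<bar>"
    using weight_bounds(1,3)[OF assms, of z] by linarith
  with that[of "(1, 0)"] show ?thesis
    by (simp add: dominant_direction_def)
qed

lemma lower_bound_in_dominant_direction:
  fixes \<phi> :: "real \<times> real \<Rightarrow> real" and z u :: "real \<times> real"
  assumes m: "1 \<le> m" and sm: "smooth2 \<phi>" and C: "0 \<le> C"
    and D3: "\<forall>z. Dnorm 3 \<phi> z \<le> C * norm z ^ (2*m - 1)"
    and D2: "\<forall>z. Dnorm 2 \<phi> z \<le> C * norm z ^ (2*m)"
    and e0: "e0 \<le> 1" "C * 4 ^ m * e0 \<le> 1 / 2"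
    and e2: "0 \<le> e2" "e2 \<le> 1 / 2" "16 * (C * 4 ^ m + 2 * real m + 1) * e2 \<le> 1"
    and u: "dominant_direction \<phi> m z u"
    and r: "0 < r" "r < e0 * norm z" and \<zeta>: "\<zeta> \<in> ball (z + (r/2) *\<^sub>R u) (e2 * r)"
    and z': "z' \<in> closed_segment z \<zeta>" and z'': "z'' \<in> closed_segment z \<zeta>"
  shows "inverse 8 * norm z ^ (2*m) * r \<le> norm (mat2_app
    (pd [True, True] \<phi> z' - cross_term m z) (pd [True, False] \<phi> z' - weight_y m z)
    (pd [True, False] \<phi> z'' + weight_x m z) (pd [False, False] \<phi> z'' + cross_term m z) (\<zeta> - z))"
proof -
  define N where "N = norm z ^ (2*m)"
  define B where "B = C * 4 ^ m + 2 * real m + 1"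
  have N: "0 \<le> N" and BN: "B * N = C * 4 ^ m * N + 2 * real m * N + N"
    by (simp_all add: N_def B_def algebra_simps)
  have nu: "norm u = 1"
    using u by (auto simp: dominant_direction_def)
  define e where "e = \<zeta> - z - (r/2) *\<^sub>R u"
  have ne: "norm e \<le> e2 * r"
    using \<zeta> by (simp add: e_def dist_norm norm_minus_commute algebra_simps)
  have near: "norm (p - z) \<le> e0 * norm z" if "p \<in> closed_segment z \<zeta>" for p
  proof -
    have "p \<in> ball z r"
      using closed_segment_offset_ball_subset[OF nu r(1) e2(2) \<zeta>] that by blast
    then show ?thesis
      using r by (simp add: dist_norm norm_minus_commute)
  qed
  have hess: "\<bar>pd ws \<phi> p\<bar> \<le> C * 4 ^ m * N" if "length ws = 2" "p \<in> closed_segment z \<zeta>" for ws p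
    unfolding N_def using norm_le_twice_if_near[OF e0(1) near[OF that(2)]]
    by (rule abs_second_pd_le[OF D2 C that(1)])
  have osc: "\<bar>pd [True, False] \<phi> p - pd [True, False] \<phi> z\<bar> \<le> N / 2" if "p \<in> closed_segment z \<zeta>" for p
    unfolding N_def by (rule abs_pd_mixed_diff_le[OF m sm C D3 e0 near[OF that]])
  have "N * r / 8 \<le> norm (mat2_app (pd [True, True] \<phi> z' - cross_term m z) (pd [True, False] \<phi> z' - weight_y m z)
      (pd [True, False] \<phi> z'' + weight_x m z) (pd [False, False] \<phi> z'' + cross_term m z) ((r / 2) *\<^sub>R u + e))"
  proof (rule norm_mat2_app_ge[where B = B and \<epsilon> = e2])
    show "u = (0, 1) \<and> N / 2 \<le> \<bar>pd [True, False] \<phi> z' - weight_y m z\<bar> \<or>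
        u = (1, 0) \<and> N / 2 \<le> \<bar>pd [True, False] \<phi> z'' + weight_x m z\<bar>"
      using u osc[OF z'] osc[OF z''] unfolding dominant_direction_def N_def by linarith
    have "\<bar>pd [True, True] \<phi> z'\<bar> \<le> C * 4 ^ m * N" "\<bar>pd [True, False] \<phi> z'\<bar> \<le> C * 4 ^ m * N"
      "\<bar>pd [True, False] \<phi> z''\<bar> \<le> C * 4 ^ m * N" "\<bar>pd [False, False] \<phi> z''\<bar> \<le> C * 4 ^ m * N"
      by (rule hess; simp add: z' z'')+
    then show "\<bar>pd [True, True] \<phi> z' - cross_term m z\<bar> \<le> B * N"
      "\<bar>pd [True, False] \<phi> z' - weight_y m z\<bar> \<le> B * N"
      "\<bar>pd [True, False] \<phi> z'' + weight_x m z\<bar> \<le> B * N"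
      "\<bar>pd [False, False] \<phi> z'' + cross_term m z\<bar> \<le> B * N"
      using abs_cross_term_le[OF m, of z] weight_bounds[OF m, of z] BN N
      unfolding N_def[symmetric] abs_le_iff by linarith+
    show "16 * B * e2 \<le> 1"
      using e2(3) by (simp add: B_def)
  qed (use ne N e2(1) r in auto)
  then show ?thesis
    by (simp add: N_def e_def)
qed

lemma exists_direction_lower_bound:
  fixes \<phi> :: "real \<times> real \<Rightarrow> real" and z :: "real \<times> real"
  assumes m: "1 \<le> m" and sm: "smooth2 \<phi>" and C: "0 \<le> C"
    and D3: "\<forall>z. Dnorm 3 \<phi> z \<le> C * norm z ^ (2*m - 1)"
    and D2: "\<forall>z. Dnorm 2 \<phi> z \<le> C * norm z ^ (2*m)"
    and e0: "e0 \<le> 1" "C * 4 ^ m * e0 \<le> 1 / 2"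
    and e2: "0 \<le> e2" "16 * (C * 4 ^ m + 2 * real m + 1) * e2 \<le> 1"
  shows "\<exists>u::real \<times> real. norm u = 1 \<and>
    (\<forall>r. 0 < r \<and> r < e0 * norm z \<longrightarrow>
      ball (z + (r/2) *\<^sub>R u) (e2 * r) \<subseteq> ball z r \<and>
      (\<forall>\<zeta> \<in> ball (z + (r/2) *\<^sub>R u) (e2 * r).
        \<forall>z' \<in> closed_segment z \<zeta>. \<forall>z'' \<in> closed_segment z \<zeta>.
          inverse 8 * norm z ^ (2*m) * r \<le> norm (mat2_app
            (pd [True, True] \<phi> z' - cross_term m z) (pd [True, False] \<phi> z' - weight_y m z)
            (pd [True, False] \<phi> z'' + weight_x m z) (pd [False, False] \<phi> z'' + cross_term m z)
            (\<zeta> - z))))"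
proof -
  have "16 * e2 \<le> 16 * (C * 4 ^ m + 2 * real m + 1) * e2"
    using e2(1) C by (intro mult_right_mono) simp_all
  then have e2_half: "e2 \<le> 1 / 2"
    using e2(2) by linarith
  obtain u where u: "dominant_direction \<phi> m z u"
    using exists_dominant_direction[OF m] by blast
  then have nu: "norm u = 1"
    by (auto simp: dominant_direction_def)
  show ?thesis
    using ball_offset_subset_ball[OF nu _ e2_half]
      lower_bound_in_dominant_direction[OF m sm C D3 D2 e0 e2(1) e2_half e2(2) u]
    by (intro exI[of _ u]) (simp add: nu)
qed

theorem proposition3p5:
  fixes \<phi> :: "real \<times> real \<Rightarrow> real" and m :: nat and C :: real
  assumes "m \<ge> 1"
    and "smooth2 \<phi>"
    and "C > 0"
    and "\<forall>z. Dnorm 3 \<phi> z \<le> C * norm z ^ (2*m - 1)"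
    and "\<forall>z. Dnorm 2 \<phi> z \<le> C * norm z ^ (2*m)"
    and "\<forall>z. Dnorm 1 \<phi> z \<le> C * norm z ^ (2*m + 1)"
  shows "\<exists>C2 \<epsilon>0 \<epsilon>2. C2 > 1 \<and> 0 < \<epsilon>0 \<and> \<epsilon>0 < 1 \<and> 0 < \<epsilon>2 \<and> \<epsilon>2 < 1 \<and>
    (\<forall>z::real \<times> real. z \<noteq> 0 \<longrightarrow>
      (\<exists>u::real \<times> real. norm u = 1 \<and>
        (\<forall>r. 0 < r \<and> r < \<epsilon>0 * norm z \<longrightarrow>
          ball (z + (r/2) *\<^sub>R u) (\<epsilon>2 * r) \<subseteq> ball z r \<and>
          (\<forall>\<zeta> \<in> ball (z + (r/2) *\<^sub>R u) (\<epsilon>2 * r).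
            \<forall>z' \<in> closed_segment z \<zeta>. \<forall>z'' \<in> closed_segment z \<zeta>.
              norm (mat2_app
                 (pd [True, True] \<phi> z' - 2 * real m * norm z ^ (2*m - 2) * fst z * snd z)
                 (pd [True, False] \<phi> z' - norm z ^ (2*m - 2) * (norm z ^ 2 + 2 * real m * (snd z)^2))
                 (pd [True, False] \<phi> z'' + norm z ^ (2*m - 2) * (norm z ^ 2 + 2 * real m * (fst z)^2))
                 (pd [False, False] \<phi> z'' + 2 * real m * norm z ^ (2*m - 2) * fst z * snd z)
                 (\<zeta> - z))
              \<ge> inverse C2 * norm z ^ (2*m) * r))))"
proof -
  define K where "K = C * 4 ^ m"
  define \<epsilon>0 where "\<epsilon>0 = 1 / (2 * K + 2)"
  define \<epsilon>2 where "\<epsilon>2 = 1 / (16 * (K + 2 * real m + 1))"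
  have K: "0 < K"
    using assms(3) by (simp add: K_def)
  have \<epsilon>0: "0 < \<epsilon>0" "\<epsilon>0 < 1" "K * \<epsilon>0 \<le> 1 / 2"
    using K by (simp_all add: \<epsilon>0_def field_simps)
  have \<epsilon>2: "0 < \<epsilon>2" "\<epsilon>2 < 1" "16 * (K + 2 * real m + 1) * \<epsilon>2 \<le> 1"
    using K by (simp_all add: \<epsilon>2_def field_simps)
  show ?thesis
    using exists_direction_lower_bound[OF assms(1,2) _ assms(4,5), of \<epsilon>0 \<epsilon>2] assms(3) \<epsilon>0 \<epsilon>2
    unfolding K_def cross_term_def weight_x_def weight_y_def
    by (intro exI[of _ 8] exI[of _ \<epsilon>0] exI[of _ \<epsilon>2]) simp
qed

end
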